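(* Let $v\in\{1,\dots,m\}$, let $B\subseteq\mathcal{L}^{mn}$ be a ball, let $B''\subseteq B$ be a ball and $\mu_{v-1}>0$ such that $\|M_{v-1}(A)\|_\infty>\rho(B)\,\mu_{v-1}\,M_{v-2}(B'')$ for all $A\in B''$. If $B'\subseteq B''$ is a ball with $\rho(B')<\tfrac12\mu_{v-1}\rho(B'')$, then $\|M_{v-1}(A')\|_\infty>\tfrac12 M_{v-1}(B')$ for every $A'\in B'$.
   Context: $\mathbb{F}$ is the finite field with $k$ elements, $\mathcal{L}=\mathbb{F}((X^{-1}))$ with absolute value $|x|=k^{n}$ where $X^n$ is the leading term of $x$, $\|\mathbf{x}\|_\infty=\max_i|x_i|$; $m\times n$ matrices are identified with $\mathcal{L}^{mn}$; balls are closed balls $\{\|A-C\|_\infty\le\rho\}$ with radius $\rho(\cdot)$. For $A\in\mathcal{L}^{mn}$ let $\tilde A^*=\begin{pmatrix}A^T&I_n\\ I_m&0\end{pmatrix}$ and $\mathrm{col}_l(\tilde A^* )$ its $l$-th column; $\mathbf{x}\cdot\mathbf{y}=\sum x_iy_i$. Fix vectors $\mathbf{y}_1,\dots,\mathbf{y}_m\in\mathcal{L}^{m+n}$ that are orthonormal (i.e. $\mathbf{y}_i\cdot\mathbf{y}_j=\delta_{ij}$ and $\|\sum_it_i\mathbf{y}_i\|_\infty=\max_i|t_i|$ for all $t_i\in\mathcal{L}$). Let $G(A)$ be the $m\times m$ matrix with entries $G(A)_{il}=\mathbf{y}_i\cdot\mathrm{col}_l(\tilde A^* )$. For $1\le v\le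 m$, $M_v(A)\in\mathcal{L}^{\binom{m}{v}^2}$ is the vector of all $v\times v$ minors of $G(A)$ in a fixed order; $M_0(A)=M_{-1}(A)=(1)\in\mathcal{L}$. For $K\subseteq\mathcal{L}^{mn}$, $M_v(K)=\max_{A\in K}\|M_v(A)\|_\infty$. *)

theory Defs
  imports "HOL-Computational_Algebra.Formal_Laurent_Series"
          "Jordan_Normal_Form.DL_Rank_Submatrix"
begin

text \<open>The field L = F((X^{-1})) over the finite field F = 'a (k = card (UNIV :: 'a set) elements) is
  represented by formal Laurent series in t = X^{-1} with finitely many negative powers
  of t ('a fls).  The leading term X^n of x corresponds to t^{-n}, i.e. n = - fls_subdegree x.\<close>

definition absL :: "'a::{field,finite} fls \<Rightarrow> real" where
  "absL x = (if x = 0 then 0 else real (card (UNIV :: 'a set)) powr (- of_int (fls_subdegree x)))"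

definition vnormL :: "'a::{field,finite} fls vec \<Rightarrow> real" where
  "vnormL x = Max (insert 0 {absL (x $ i) | i. i < dim_vec x})"

definition mnormL :: "'a::{field,finite} fls mat \<Rightarrow> real" where
  "mnormL A = Max (insert 0 {absL (A $$ (i,j)) | i j. i < dim_row A \<and> j < dim_col A})"

definition radL :: "'a::{field,finite} itself \<Rightarrow> int \<Rightarrow> real" where
  "radL _ z = real (card (UNIV :: 'a set)) powr of_int z"

definition ballL :: "nat \<Rightarrow> nat \<Rightarrow> 'a::{field,finite} fls mat \<Rightarrow> int \<Rightarrow> 'a fls mat set" where
  "ballL m n C z = {A \<in> carrier_mat m n. mnormL (A - C) \<le> radL TYPE('a) z}"

definition tildeAstar :: "nat \<Rightarrow> nat \<Rightarrow> 'a::field fls mat \<Rightarrow> 'a fls mat" where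
  "tildeAstar m n A = four_block_mat (transpose_mat A) (1\<^sub>m n) (1\<^sub>m m) (0\<^sub>m m n)"

definition Gmat :: "(nat \<Rightarrow> 'a::field fls vec) \<Rightarrow> nat \<Rightarrow> nat \<Rightarrow> 'a fls mat \<Rightarrow> 'a fls mat" where
  "Gmat y m n A = mat m m (\<lambda>(i,l). y i \<bullet> col (tildeAstar m n A) l)"

definition MnormL :: "(nat \<Rightarrow> 'a::{field,finite} fls vec) \<Rightarrow> nat \<Rightarrow> nat \<Rightarrow> int \<Rightarrow> 'a fls mat \<Rightarrow> real" where
  "MnormL y m n j A = (if j \<le> 0 then 1 else
     Max {absL (det (submatrix (Gmat y m n A) I J)) | I J.
            I \<subseteq> {..<m} \<and> J \<subseteq> {..<m} \<and> card I = nat j \<and> card J = nat j})"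

definition MsetL :: "(nat \<Rightarrow> 'a::{field,finite} fls vec) \<Rightarrow> nat \<Rightarrow> nat \<Rightarrow> int \<Rightarrow> 'a fls mat set \<Rightarrow> real" where
  "MsetL y m n j K = (SUP A\<in>K. MnormL y m n j A)"

definition orthonormalL :: "nat \<Rightarrow> nat \<Rightarrow> (nat \<Rightarrow> 'a::{field,finite} fls vec) \<Rightarrow> bool" where
  "orthonormalL m n y \<longleftrightarrow>
     (\<forall>i<m. y i \<in> carrier_vec (m + n)) \<and>
     (\<forall>i<m. \<forall>j<m. y i \<bullet> y j = (if i = j then 1 else 0)) \<and>
     (\<forall>t :: nat \<Rightarrow> 'a fls. vnormL (vec (m + n) (\<lambda>k. \<Sum>i<m. t i * (y i $ k)))
                         = Max (insert 0 {absL (t i) | i. i < m}))"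

end

theory Submission
  imports Defs
begin

text \<open>Column l of G(A) depends only on row l of A, affinely and with coefficients of absolute
  value at most 1 (orthonormality of the y_i). Exchanging the columns of G(A') for those of G(A)
  one at a time, and expanding each minor along the exchanged column, changes a (v-1)-minor by at
  most the distance of A and A' times a (v-2)-minor of G at a matrix whose rows come from A or A';
  that matrix stays in the ball B''. For A, A' in B' the change is therefore smaller than
  rho(B) mu M_{v-2}(B'') < ||M_{v-1}(A)||, so by the strict ultrametric inequality the largest
  minor at A is matched at A', i.e. ||M_{v-1}(A)|| <= ||M_{v-1}(A')||.\<close>

section \<open>The ultrametric absolute value on F((X^-1))\<close>

lemma two_le_card_UNIV: "real (card (UNIV :: 'a::{field,finite} set)) \<ge> 2"
proof -
  have "card {0::'a, 1} \<le> card (UNIV :: 'a set)"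
    by (intro card_mono) auto
  thus ?thesis by simp
qed

lemma absL_nonneg: "absL x \<ge> 0"
  unfolding absL_def by auto

lemma absL_0 [simp]: "absL 0 = 0"
  unfolding absL_def by simp

lemma absL_1 [simp]: "absL (1 :: 'a::{field,finite} fls) = 1"
  unfolding absL_def by simp

lemma absL_minus [simp]: "absL (- x :: 'a::{field,finite} fls) = absL x"
  unfolding absL_def by auto

lemma absL_mult: "absL (x * y :: 'a::{field,finite} fls) = absL x * absL y"
proof (cases "x = 0 \<or> y = 0")
  case False
  thus ?thesis using two_le_card_UNIV[where 'a = 'a]
    by (auto simp: absL_def powr_add[symmetric] algebra_simps)
qed auto

lemma absL_add_le_max: "absL (x + y :: 'a::{field,finite} fls) \<le> max (absL x) (absL y)"
proof (cases "x = 0 \<or> y = 0 \<or> x + y = 0")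
  case True
  thus ?thesis using absL_nonneg[of x] absL_nonneg[of y] by auto
next
  case False
  hence "min (fls_subdegree x) (fls_subdegree y) \<le> fls_subdegree (x + y)"
    by (intro fls_plus_subdegree) auto
  hence "real (card (UNIV :: 'a set)) powr (- of_int (fls_subdegree (x + y)))
      \<le> real (card (UNIV :: 'a set)) powr (- of_int (min (fls_subdegree x) (fls_subdegree y)))"
    using two_le_card_UNIV[where 'a = 'a] by (intro powr_mono) auto
  thus ?thesis using False unfolding absL_def
    by (cases "fls_subdegree x \<le> fls_subdegree y") (auto simp: min_def)
qed

lemma absL_diff_le_max: "absL (x - y :: 'a::{field,finite} fls) \<le> max (absL x) (absL y)"
  using absL_add_le_max[of x "- y"] by simp

lemma absL_add_le:
  fixes x y :: "'a::{field,finite} fls"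
  shows "absL x \<le> b \<Longrightarrow> absL y \<le> b \<Longrightarrow> absL (x + y) \<le> b"
  using absL_add_le_max[of x y] by simp

lemma absL_diff_le:
  fixes x y :: "'a::{field,finite} fls"
  shows "absL x \<le> b \<Longrightarrow> absL y \<le> b \<Longrightarrow> absL (x - y) \<le> b"
  using absL_diff_le_max[of x y] by simp

lemma absL_le_of_absL_diff_less:
  fixes x y :: "'a::{field,finite} fls"
  assumes "absL (x - y) < absL x"
  shows "absL x \<le> absL y"
  using absL_add_le_max[of y "x - y"] assms by auto

lemma absL_sum_le:
  fixes f :: "'b \<Rightarrow> 'a::{field,finite} fls"
  assumes "\<And>i. i \<in> S \<Longrightarrow> absL (f i) \<le> b" and "b \<ge> 0"
  shows "absL (sum f S) \<le> b"
  using assms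
proof (induction S rule: infinite_finite_induct)
  case (insert x F)
  have "absL (sum f (insert x F)) \<le> max (absL (f x)) (absL (sum f F))"
    using insert.hyps absL_add_le_max by simp
  also have "\<dots> \<le> b" using insert by auto
  finally show ?case .
qed auto

lemma absL_prod_le:
  fixes f :: "'b \<Rightarrow> 'a::{field,finite} fls"
  assumes "finite S" and "\<And>i. i \<in> S \<Longrightarrow> absL (f i) \<le> b" and "b \<ge> 0"
  shows "absL (prod f S) \<le> b ^ card S"
  using assms
proof (induction S rule: finite_induct)
  case (insert x F)
  have "absL (prod f (insert x F)) = absL (f x) * absL (prod f F)"
    using insert.hyps by (simp add: absL_mult)
  also have "\<dots> \<le> b * b ^ card F"
    using insert by (intro mult_mono) (auto simp: absL_nonneg)
  finally show ?case using insert.hyps by simp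
qed simp

lemma absL_mult_le:
  fixes x y :: "'a::{field,finite} fls"
  assumes "absL x \<le> a" and "absL y \<le> b"
  shows "absL (x * y) \<le> a * b"
  unfolding absL_mult
  by (rule mult_mono) (use assms absL_nonneg[of x] absL_nonneg[of y] in linarith)+

lemma absL_signof [simp]: "absL (signof p :: 'a::{field,finite} fls) = 1"
  by (simp add: sign_def)

lemma absL_neg_one_power [simp]: "absL ((- 1) ^ k :: 'a::{field,finite} fls) = 1"
  by (cases "even k") auto

lemma radL_pos: "radL TYPE('a::{field,finite}) z > 0"
  unfolding radL_def using two_le_card_UNIV[where 'a = 'a] by simp

section \<open>Sup norm and balls of matrices\<close>

lemma finite_mnormL_entries: "finite {absL (A $$ (i, j)) | i j. i < dim_row A \<and> j < dim_col A}"
proof -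
  have "{absL (A $$ (i, j)) | i j. i < dim_row A \<and> j < dim_col A}
      = (\<lambda>(i, j). absL (A $$ (i, j))) ` ({..<dim_row A} \<times> {..<dim_col A})" by auto
  thus ?thesis by simp
qed

lemma mnormL_nonneg: "mnormL A \<ge> 0"
  unfolding mnormL_def using finite_mnormL_entries[of A] by (intro Max_ge) auto

lemma absL_le_mnormL: "i < dim_row A \<Longrightarrow> j < dim_col A \<Longrightarrow> absL (A $$ (i, j)) \<le> mnormL A"
  unfolding mnormL_def using finite_mnormL_entries[of A] by (intro Max_ge) auto

lemma mnormL_leI:
  assumes "\<And>i j. i < dim_row A \<Longrightarrow> j < dim_col A \<Longrightarrow> absL (A $$ (i, j)) \<le> r" and "r \<ge> 0"
  shows "mnormL A \<le> r"
  unfolding mnormL_def using finite_mnormL_entries[of A] assms by (subst Max_le_iff) auto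

lemma ballL_carrier: "A \<in> ballL m n C z \<Longrightarrow> A \<in> carrier_mat m n"
  unfolding ballL_def by simp

lemma ballL_entry_le:
  fixes C :: "'a::{field,finite} fls mat"
  assumes "A \<in> ballL m n C z" and "C \<in> carrier_mat m n" and "i < m" and "j < n"
  shows "absL (A $$ (i, j) - C $$ (i, j)) \<le> radL TYPE('a) z"
proof -
  have "absL ((A - C) $$ (i, j)) \<le> mnormL (A - C)"
    using assms by (intro absL_le_mnormL) auto
  thus ?thesis using assms unfolding ballL_def by auto
qed

lemma ballL_iff_entries:
  fixes C :: "'a::{field,finite} fls mat"
  assumes "C \<in> carrier_mat m n"
  shows "A \<in> ballL m n C z \<longleftrightarrow> A \<in> carrier_mat m n \<and>
           (\<forall>i<m. \<forall>j<n. absL (A $$ (i, j) - C $$ (i, j)) \<le> radL TYPE('a) z)"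
  using assms ballL_entry_le[of A m n C z] radL_pos[where 'a = 'a and z = z]
  by (auto simp: ballL_def intro!: mnormL_leI)

lemma center_in_ballL: "(C :: 'a::{field,finite} fls mat) \<in> carrier_mat m n \<Longrightarrow> C \<in> ballL m n C z"
  using radL_pos[where 'a = 'a and z = z] by (simp add: ballL_iff_entries less_imp_le)

lemma mnormL_diff_le_radL:
  fixes C :: "'a::{field,finite} fls mat"
  assumes "A \<in> ballL m n C z" and "A' \<in> ballL m n C z" and "C \<in> carrier_mat m n"
  shows "mnormL (A' - A) \<le> radL TYPE('a) z"
proof (rule mnormL_leI)
  fix i j assume "i < dim_row (A' - A)" "j < dim_col (A' - A)"
  hence ij: "i < m" "j < n" using ballL_carrier[OF assms(1)] by auto
  have "(A' - A) $$ (i, j) = (A' $$ (i, j) - C $$ (i, j)) - (A $$ (i, j) - C $$ (i, j))"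
    using ij ballL_carrier[OF assms(1)] ballL_carrier[OF assms(2)] by simp
  thus "absL ((A' - A) $$ (i, j)) \<le> radL TYPE('a) z"
    by (simp only:) (intro absL_diff_le ballL_entry_le[OF assms(2,3) ij] ballL_entry_le[OF assms(1,3) ij])
qed (rule less_imp_le[OF radL_pos])

section \<open>Minors under replacement of columns\<close>

lemma pick_less_of_subset: "I \<subseteq> {..<m} \<Longrightarrow> i < card I \<Longrightarrow> pick I i < m"
  using pick_in_set_le[of i I] by auto

lemma pick_eq_iff:
  assumes "a < card S" and "b < card S"
  shows "pick S a = pick S b \<longleftrightarrow> a = b"
  using pick_mono_le[OF assms(1), of b] pick_mono_le[OF assms(2), of a]
  by (cases a b rule: linorder_cases) auto

lemma Collect_less_and_mem_eq: "I \<subseteq> {..<m} \<Longrightarrow> {i. i < m \<and> i \<in> I} = I"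
  by auto

lemma submatrix_carrier:
  assumes "G \<in> carrier_mat m m'" and "I \<subseteq> {..<m}" and "J \<subseteq> {..<m'}"
  shows "submatrix G I J \<in> carrier_mat (card I) (card J)"
  using assms unfolding carrier_mat_def by (simp add: dim_submatrix Collect_less_and_mem_eq)

lemma submatrix_index_pick:
  assumes "G \<in> carrier_mat m m'" and "I \<subseteq> {..<m}" and "J \<subseteq> {..<m'}"
    and "i < card I" and "j < card J"
  shows "submatrix G I J $$ (i, j) = G $$ (pick I i, pick J j)"
  using assms unfolding carrier_mat_def by (intro submatrix_index) (simp_all add: Collect_less_and_mem_eq)

lemma pick_Diff_pick:
  assumes "finite I" and "a < card I" and "b < card I - 1"
  shows "pick (I - {pick I a}) b = pick I (if b < a then b else Suc b)"
proof -
  define b' where "b' = (if b < a then b else Suc b)"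
  have b': "b' < card I" "b' \<noteq> a" using assms unfolding b'_def by auto
  have in_I: "pick I b' \<in> I - {pick I a}"
    using pick_in_set_le[OF b'(1)] pick_eq_iff[OF b'(1) assms(2)] b'(2) by auto
  have "card {x \<in> I - {pick I a}. x < pick I b'} = b"
  proof (cases "b < a")
    case True
    hence "{x \<in> I - {pick I a}. x < pick I b'} = {x \<in> I. x < pick I b'}"
      using pick_mono_le[OF assms(2), of b] unfolding b'_def by auto
    thus ?thesis using card_pick_le[OF b'(1)] True unfolding b'_def by simp
  next
    case False
    hence "{x \<in> I - {pick I a}. x < pick I b'} = {x \<in> I. x < pick I b'} - {pick I a}"
      and "pick I a \<in> {x \<in> I. x < pick I b'}"
      using pick_mono_le[OF b'(1), of a] pick_in_set_le[OF assms(2)] unfolding b'_def by auto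
    thus ?thesis using card_pick_le[OF b'(1)] assms(1) False unfolding b'_def by simp
  qed
  hence "pick (I - {pick I a}) b = pick (I - {pick I a}) (card {x \<in> I - {pick I a}. x < pick I b'})"
    by simp
  also have "\<dots> = pick I b'" using in_I by (rule pick_card_in_set)
  finally show ?thesis unfolding b'_def .
qed

lemma mat_delete_submatrix:
  assumes G: "G \<in> carrier_mat m m'" and I: "I \<subseteq> {..<m}" and J: "J \<subseteq> {..<m'}"
    and a: "a < card I" and c: "c < card J"
  shows "mat_delete (submatrix G I J) a c = submatrix G (I - {pick I a}) (J - {pick J c})"
proof -
  have fin: "finite I" "finite J" using I J finite_subset by auto
  have card_del: "card (I - {pick I a}) = card I - 1" "card (J - {pick J c}) = card J - 1"
    using pick_in_set_le[OF a] pick_in_set_le[OF c] fin by auto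
  have sub: "submatrix G I J \<in> carrier_mat (card I) (card J)"
    and sub_del: "submatrix G (I - {pick I a}) (J - {pick J c}) \<in> carrier_mat (card I - 1) (card J - 1)"
    using submatrix_carrier[OF G I J] submatrix_carrier[OF G, of "I - {pick I a}" "J - {pick J c}"]
      I J card_del by auto
  show ?thesis
  proof (rule eq_matI)
    fix i j assume "i < dim_row (submatrix G (I - {pick I a}) (J - {pick J c}))"
      "j < dim_col (submatrix G (I - {pick I a}) (J - {pick J c}))"
    hence ij: "i < card I - 1" "j < card J - 1" using sub_del by auto
    have "mat_delete (submatrix G I J) a c $$ (i, j)
        = G $$ (pick I (if i < a then i else Suc i), pick J (if j < c then j else Suc j))"
      using ij sub by (simp add: mat_delete_def submatrix_index_pick[OF G I J])
    also have "\<dots> = G $$ (pick (I - {pick I a}) i, pick (J - {pick J c}) j)"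
      by (simp only: pick_Diff_pick[OF fin(1) a ij(1)] pick_Diff_pick[OF fin(2) c ij(2)])
    also have "\<dots> = submatrix G (I - {pick I a}) (J - {pick J c}) $$ (i, j)"
      using ij I J card_del by (intro submatrix_index_pick[OF G, symmetric]) auto
    finally show "mat_delete (submatrix G I J) a c $$ (i, j)
        = submatrix G (I - {pick I a}) (J - {pick J c}) $$ (i, j)" .
  qed (use sub sub_del in auto)
qed

lemma absL_det_le_power:
  fixes P :: "'a::{field,finite} fls mat"
  assumes P: "P \<in> carrier_mat d d"
    and entries: "\<And>i j. i < d \<Longrightarrow> j < d \<Longrightarrow> absL (P $$ (i, j)) \<le> K"
    and K: "K \<ge> 0"
  shows "absL (det P) \<le> K ^ d"
  unfolding det_def'[OF P]
proof (rule absL_sum_le)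
  fix p assume "p \<in> {p. p permutes {0..<d}}"
  hence "\<And>i. i < d \<Longrightarrow> p i < d" using permutes_in_image by fastforce
  hence "absL (\<Prod>i = 0..<d. P $$ (i, p i)) \<le> K ^ card {0..<d}"
    by (intro absL_prod_le entries K) auto
  thus "absL (signof p * (\<Prod>i = 0..<d. P $$ (i, p i))) \<le> K ^ d"
    by (simp add: absL_mult)
qed (simp add: K)

lemma absL_cofactor_submatrix_le:
  fixes G :: "'a::{field,finite} fls mat"
  assumes G: "G \<in> carrier_mat m m'" and I: "I \<subseteq> {..<m}" and J: "J \<subseteq> {..<m'}"
    and cards: "card I = d" "card J = d" and i: "i < d" and c: "c < d"
    and minors: "\<And>I' J'. I' \<subseteq> {..<m} \<Longrightarrow> J' \<subseteq> {..<m'}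
                   \<Longrightarrow> card I' = d - 1 \<Longrightarrow> card J' = d - 1
                   \<Longrightarrow> absL (det (submatrix G I' J')) \<le> S"
  shows "absL (cofactor (submatrix G I J) i c) \<le> S"
proof -
  have "card (I - {pick I i}) = d - 1" "card (J - {pick J c}) = d - 1"
    using pick_in_set_le[of i I] pick_in_set_le[of c J] i c cards I J finite_subset by auto
  hence "absL (det (mat_delete (submatrix G I J) i c)) \<le> S"
    using I J i c cards by (auto simp: mat_delete_submatrix[OF G I J] intro!: minors)
  thus ?thesis by (simp add: cofactor_def absL_mult)
qed

lemma det_diff_single_column:
  fixes P0 P1 :: "'b::comm_ring_1 mat"
  assumes P0: "P0 \<in> carrier_mat d d" and P1: "P1 \<in> carrier_mat d d" and c: "c < d"
    and same: "\<And>i j. i < d \<Longrightarrow> j < d \<Longrightarrow> j \<noteq> c \<Longrightarrow> P1 $$ (i, j) = P0 $$ (i, j)"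
  shows "det P1 - det P0 = (\<Sum>i<d. (P1 $$ (i, c) - P0 $$ (i, c)) * cofactor P0 i c)"
proof -
  have "mat_delete P1 i c = mat_delete P0 i c" for i
    using P0 P1 by (intro eq_matI) (auto simp: mat_delete_def intro!: same)
  hence "cofactor P1 i c = cofactor P0 i c" for i by (simp add: cofactor_def)
  thus ?thesis
    by (simp add: laplace_expansion_column[OF P0 c] laplace_expansion_column[OF P1 c]
        sum_subtractf[symmetric] algebra_simps)
qed

definition col_hybrid :: "'b mat \<Rightarrow> 'b mat \<Rightarrow> nat \<Rightarrow> 'b mat" where
  "col_hybrid G0 G1 k =
     mat (dim_row G0) (dim_col G0) (\<lambda>(i, l). if l < k then G1 $$ (i, l) else G0 $$ (i, l))"

lemma col_hybrid_carrier: "G0 \<in> carrier_mat m m' \<Longrightarrow> col_hybrid G0 G1 k \<in> carrier_mat m m'"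
  unfolding col_hybrid_def carrier_mat_def by simp

lemma col_hybrid_0: "col_hybrid G0 G1 0 = G0"
  unfolding col_hybrid_def by (rule eq_matI) simp_all

lemma col_hybrid_all:
  "G0 \<in> carrier_mat m m' \<Longrightarrow> G1 \<in> carrier_mat m m' \<Longrightarrow> col_hybrid G0 G1 m' = G1"
  unfolding col_hybrid_def carrier_mat_def by (rule eq_matI) simp_all

lemma submatrix_col_hybrid_index:
  assumes "G0 \<in> carrier_mat m m'" and "I \<subseteq> {..<m}" and "J \<subseteq> {..<m'}"
    and "i < card I" and "j < card J"
  shows "submatrix (col_hybrid G0 G1 k) I J $$ (i, j)
       = (if pick J j < k then G1 else G0) $$ (pick I i, pick J j)"
proof -
  have "submatrix (col_hybrid G0 G1 k) I J $$ (i, j) = col_hybrid G0 G1 k $$ (pick I i, pick J j)"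
    by (rule submatrix_index_pick[OF col_hybrid_carrier[OF assms(1)] assms(2-5)])
  thus ?thesis
    using assms(1) pick_less_of_subset[OF assms(2,4)] pick_less_of_subset[OF assms(3,5)]
    by (simp add: col_hybrid_def)
qed

lemma absL_det_submatrix_col_hybrid_step:
  fixes G0 G1 :: "'a::{field,finite} fls mat"
  assumes G0: "G0 \<in> carrier_mat m m'"
    and entries: "\<And>i. i < m \<Longrightarrow> absL (G1 $$ (i, k) - G0 $$ (i, k)) \<le> \<delta>"
    and nonneg: "\<delta> \<ge> 0" "S \<ge> 0"
    and minors: "\<And>I' J'. I' \<subseteq> {..<m} \<Longrightarrow> J' \<subseteq> {..<m'}
                   \<Longrightarrow> card I' = d - 1 \<Longrightarrow> card J' = d - 1
                   \<Longrightarrow> absL (det (submatrix (col_hybrid G0 G1 k) I' J')) \<le> S"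
    and I: "I \<subseteq> {..<m}" and J: "J \<subseteq> {..<m'}" and cards: "card I = d" "card J = d"
  shows "absL (det (submatrix (col_hybrid G0 G1 (Suc k)) I J)
              - det (submatrix (col_hybrid G0 G1 k) I J)) \<le> \<delta> * S"
proof -
  define P0 where "P0 = submatrix (col_hybrid G0 G1 k) I J"
  define P1 where "P1 = submatrix (col_hybrid G0 G1 (Suc k)) I J"
  have P: "P0 \<in> carrier_mat d d" "P1 \<in> carrier_mat d d"
    unfolding P0_def P1_def using submatrix_carrier[OF col_hybrid_carrier[OF G0] I J] cards by auto
  have index: "P0 $$ (i, j) = (if pick J j < k then G1 else G0) $$ (pick I i, pick J j)"
    "P1 $$ (i, j) = (if pick J j < Suc k then G1 else G0) $$ (pick I i, pick J j)"
    if "i < d" "j < d" for i j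
    unfolding P0_def P1_def using that cards by (simp_all add: submatrix_col_hybrid_index[OF G0 I J])
  show ?thesis
  proof (cases "k \<in> J")
    case False
    have "pick J j \<noteq> k" if "j < d" for j
      using pick_in_set_le[of j J] that cards False by auto
    hence "P1 = P0" using P by (intro eq_matI) (auto simp: index less_Suc_eq)
    thus ?thesis using nonneg unfolding P0_def P1_def by simp
  next
    case True
    define c where "c = card {a \<in> J. a < k}"
    have pick_c: "pick J c = k" unfolding c_def using True by (rule pick_card_in_set)
    have "{a \<in> J. a < k} \<subset> J" using True by auto
    hence c: "c < d"
      unfolding c_def using psubset_card_mono[OF finite_subset[OF J finite_lessThan]] cards by simp
    have other_cols: "pick J j \<noteq> k" if "j < d" "j \<noteq> c" for j
      using pick_eq_iff[of j J c] that c cards pick_c by auto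
    have "det P1 - det P0 = (\<Sum>i<d. (P1 $$ (i, c) - P0 $$ (i, c)) * cofactor P0 i c)"
      using P c by (intro det_diff_single_column) (auto simp: index other_cols less_Suc_eq)
    also have "absL \<dots> \<le> \<delta> * S"
    proof (intro absL_sum_le absL_mult_le)
      fix i assume "i \<in> {..<d}"
      hence i: "i < d" by simp
      show "absL (P1 $$ (i, c) - P0 $$ (i, c)) \<le> \<delta>"
        using entries[OF pick_less_of_subset[OF I]] i c cards by (simp add: index pick_c)
      show "absL (cofactor P0 i c) \<le> S"
        unfolding P0_def using I J cards i c minors
        by (intro absL_cofactor_submatrix_le[OF col_hybrid_carrier[OF G0]]) auto
    qed (use nonneg in auto)
    finally show ?thesis unfolding P0_def P1_def .
  qed
qed

lemma absL_det_submatrix_diff_le: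
  fixes G0 G1 :: "'a::{field,finite} fls mat"
  assumes G0: "G0 \<in> carrier_mat m m'" and G1: "G1 \<in> carrier_mat m m'"
    and entries: "\<And>i l. i < m \<Longrightarrow> l < m' \<Longrightarrow> absL (G1 $$ (i, l) - G0 $$ (i, l)) \<le> \<delta>"
    and nonneg: "\<delta> \<ge> 0" "S \<ge> 0"
    and minors: "\<And>k I' J'. k \<le> m' \<Longrightarrow> I' \<subseteq> {..<m} \<Longrightarrow> J' \<subseteq> {..<m'}
                   \<Longrightarrow> card I' = d - 1 \<Longrightarrow> card J' = d - 1
                   \<Longrightarrow> absL (det (submatrix (col_hybrid G0 G1 k) I' J')) \<le> S"
    and I: "I \<subseteq> {..<m}" and J: "J \<subseteq> {..<m'}" and cards: "card I = d" "card J = d"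
  shows "absL (det (submatrix G1 I J) - det (submatrix G0 I J)) \<le> \<delta> * S"
proof -
  have "absL (det (submatrix (col_hybrid G0 G1 k) I J) - det (submatrix (col_hybrid G0 G1 0) I J))
      \<le> \<delta> * S" if "k \<le> m'" for k
    using that
  proof (induction k)
    case 0
    thus ?case using nonneg by simp
  next
    case (Suc k)
    let ?D = "\<lambda>k. det (submatrix (col_hybrid G0 G1 k) I J)"
    have step: "absL (?D (Suc k) - ?D k) \<le> \<delta> * S"
      using Suc.prems entries nonneg minors I J cards
      by (intro absL_det_submatrix_col_hybrid_step[OF G0]) auto
    have "absL (?D (Suc k) - ?D 0) = absL ((?D (Suc k) - ?D k) + (?D k - ?D 0))"
      by simp
    also have "\<dots> \<le> max (absL (?D (Suc k) - ?D k)) (absL (?D k - ?D 0))"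
      by (rule absL_add_le_max)
    also have "\<dots> \<le> \<delta> * S" using step Suc.IH[OF Suc_leD[OF Suc.prems]] by simp
    finally show ?case .
  qed
  from this[of m'] show ?thesis by (simp add: col_hybrid_0 col_hybrid_all[OF G0 G1])
qed

section \<open>The matrix G(A)\<close>

lemma absL_le_vnormL: "k < dim_vec x \<Longrightarrow> absL (vec_index x k) \<le> vnormL x"
proof -
  assume k: "k < dim_vec x"
  have "{absL (vec_index x i) | i. i < dim_vec x} = (\<lambda>i. absL (vec_index x i)) ` {..<dim_vec x}" by auto
  thus ?thesis unfolding vnormL_def using k by (intro Max_ge) auto
qed

lemma absL_orthonormal_entry_le:
  fixes y :: "nat \<Rightarrow> 'a::{field,finite} fls vec"
  assumes orth: "orthonormalL m n y" and i: "i < m" and r: "r < m + n"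
  shows "absL (vec_index (y i) r) \<le> 1"
proof -
  define t :: "nat \<Rightarrow> 'a fls" where "t = (\<lambda>i'. if i' = i then 1 else 0)"
  have "(\<Sum>i'<m. t i' * vec_index (y i') r) = (\<Sum>i'<m. if i' = i then vec_index (y i) r else 0)"
    by (rule sum.cong) (auto simp: t_def)
  hence "(\<Sum>i'<m. t i' * vec_index (y i') r) = vec_index (y i) r" using i by simp
  hence "absL (vec_index (y i) r) \<le> vnormL (vec (m + n) (\<lambda>k. \<Sum>i'<m. t i' * vec_index (y i') k))"
    using absL_le_vnormL[of r "vec (m + n) (\<lambda>k. \<Sum>i'<m. t i' * vec_index (y i') k)"] r by simp
  also have "\<dots> = Max (insert 0 {absL (t i') | i'. i' < m})"
    using orth unfolding orthonormalL_def by blast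
  also have "\<dots> \<le> 1"
  proof -
    have "{absL (t i') | i'. i' < m} = (\<lambda>i'. absL (t i')) ` {..<m}" by auto
    thus ?thesis by (simp add: t_def)
  qed
  finally show ?thesis .
qed

lemma dim_Gmat: "dim_row (Gmat y m n X) = m" "dim_col (Gmat y m n X) = m"
  unfolding Gmat_def by simp_all

lemma Gmat_carrier: "Gmat y m n X \<in> carrier_mat m m"
  by (rule carrier_matI) (simp_all add: dim_Gmat)

text \<open>Column l of the second block row of tilde A^* is the unit vector e_l, so it contributes
  the single coordinate n + l of y_i.\<close>

lemma Gmat_index:
  assumes X: "X \<in> carrier_mat m n" and i: "i < m" and l: "l < m"
  shows "Gmat y m n X $$ (i, l) = (\<Sum>r<n. vec_index (y i) r * X $$ (l, r)) + vec_index (y i) (n + l)"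
proof -
  define e where "e r = (if r < n then X $$ (l, r) else if r = n + l then 1 else 0)" for r
  have "col (tildeAstar m n X) l = vec (n + m) e"
    using X l by (intro eq_vecI) (auto simp: tildeAstar_def e_def)
  moreover have "dim_row (tildeAstar m n X) = n + m" using X by (simp add: tildeAstar_def)
  ultimately have "Gmat y m n X $$ (i, l) = (\<Sum>r = 0..<n + m. vec_index (y i) r * e r)"
    using i l by (auto simp: Gmat_def scalar_prod_def intro!: sum.cong)
  also have "\<dots> = (\<Sum>r = 0..<n. vec_index (y i) r * e r) + (\<Sum>r = n..<n + m. vec_index (y i) r * e r)"
    by (simp add: sum.atLeastLessThan_concat)
  finally have "Gmat y m n X $$ (i, l)
      = (\<Sum>r = 0..<n. vec_index (y i) r * e r) + (\<Sum>r = n..<n + m. vec_index (y i) r * e r)" .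
  moreover have "(\<Sum>r = 0..<n. vec_index (y i) r * e r) = (\<Sum>r<n. vec_index (y i) r * X $$ (l, r))"
    by (auto simp: e_def atLeast0LessThan intro: sum.cong)
  moreover have "(\<Sum>r = n..<n + m. vec_index (y i) r * e r)
      = (\<Sum>r = n..<n + m. if r = n + l then vec_index (y i) (n + l) else 0)"
    by (rule sum.cong) (auto simp: e_def)
  ultimately show ?thesis using l by simp
qed

lemma absL_Gmat_le:
  fixes y :: "nat \<Rightarrow> 'a::{field,finite} fls vec"
  assumes orth: "orthonormalL m n y" and X: "X \<in> carrier_mat m n" and i: "i < m" and l: "l < m"
    and K: "K \<ge> 1" and entries: "\<And>r. r < n \<Longrightarrow> absL (X $$ (l, r)) \<le> K"
  shows "absL (Gmat y m n X $$ (i, l)) \<le> K"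
proof -
  have "absL (\<Sum>r<n. vec_index (y i) r * X $$ (l, r)) \<le> 1 * K"
    using absL_orthonormal_entry_le[OF orth i] entries K by (intro absL_sum_le absL_mult_le) auto
  moreover have "absL (vec_index (y i) (n + l)) \<le> K"
    using absL_orthonormal_entry_le[OF orth i, of "n + l"] l K by simp
  ultimately show ?thesis unfolding Gmat_index[OF X i l] by (simp add: absL_add_le)
qed

lemma absL_Gmat_diff_le:
  fixes y :: "nat \<Rightarrow> 'a::{field,finite} fls vec"
  assumes orth: "orthonormalL m n y" and X: "X \<in> carrier_mat m n" and X': "X' \<in> carrier_mat m n"
    and i: "i < m" and l: "l < m"
  shows "absL (Gmat y m n X' $$ (i, l) - Gmat y m n X $$ (i, l)) \<le> mnormL (X' - X)"
proof -
  have "Gmat y m n X' $$ (i, l) - Gmat y m n X $$ (i, l) = (\<Sum>r<n. vec_index (y i) r * (X' - X) $$ (l, r))"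
    using X X' l by (simp add: Gmat_index[OF X i l] Gmat_index[OF X' i l] sum_subtractf[symmetric]
        algebra_simps)
  also have "absL \<dots> \<le> 1 * mnormL (X' - X)"
    using absL_orthonormal_entry_le[OF orth i] absL_le_mnormL[of l "X' - X"] X X' l
    by (intro absL_sum_le absL_mult_le) (auto simp: mnormL_nonneg)
  finally show ?thesis by simp
qed

definition row_hybrid :: "'b mat \<Rightarrow> 'b mat \<Rightarrow> nat \<Rightarrow> 'b mat" where
  "row_hybrid X X' k =
     mat (dim_row X) (dim_col X) (\<lambda>(l, r). if l < k then X' $$ (l, r) else X $$ (l, r))"

lemma col_hybrid_Gmat:
  assumes X: "X \<in> carrier_mat m n" and X': "X' \<in> carrier_mat m n"
  shows "col_hybrid (Gmat y m n X) (Gmat y m n X') k = Gmat y m n (row_hybrid X X' k)"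
proof (rule eq_matI)
  fix i l assume "i < dim_row (Gmat y m n (row_hybrid X X' k))" "l < dim_col (Gmat y m n (row_hybrid X X' k))"
  hence il: "i < m" "l < m" by (simp_all add: dim_Gmat)
  have H: "row_hybrid X X' k \<in> carrier_mat m n" using X unfolding row_hybrid_def carrier_mat_def by simp
  have rows: "(\<Sum>r<n. vec_index (y i) r * row_hybrid X X' k $$ (l, r))
      = (\<Sum>r<n. vec_index (y i) r * (if l < k then X' else X) $$ (l, r))"
    using X il by (intro sum.cong) (auto simp: row_hybrid_def)
  have "col_hybrid (Gmat y m n X) (Gmat y m n X') k $$ (i, l)
      = (if l < k then Gmat y m n X' $$ (i, l) else Gmat y m n X $$ (i, l))"
    using il by (simp add: col_hybrid_def dim_Gmat)
  also have "\<dots> = Gmat y m n (row_hybrid X X' k) $$ (i, l)"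
    unfolding Gmat_index[OF H il] rows using Gmat_index[OF X il] Gmat_index[OF X' il] by simp
  finally show "col_hybrid (Gmat y m n X) (Gmat y m n X') k $$ (i, l)
      = Gmat y m n (row_hybrid X X' k) $$ (i, l)" .
qed (simp_all add: col_hybrid_def dim_Gmat)

lemma row_hybrid_in_ballL:
  fixes C :: "'a::{field,finite} fls mat"
  assumes "C \<in> carrier_mat m n" and "X \<in> ballL m n C z" and "X' \<in> ballL m n C z"
  shows "row_hybrid X X' k \<in> ballL m n C z"
  using assms by (auto simp: ballL_iff_entries row_hybrid_def)

section \<open>Norms of the vectors of minors\<close>

lemma MnormL_eq_Max:
  "d \<ge> 1 \<Longrightarrow> MnormL y m n (int d) X =
     Max ((\<lambda>(I, J). absL (det (submatrix (Gmat y m n X) I J))) `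
       {(I, J). I \<subseteq> {..<m} \<and> J \<subseteq> {..<m} \<and> card I = d \<and> card J = d})"
  unfolding MnormL_def by (auto intro!: arg_cong[where f = Max])

lemma finite_minor_indices:
  "finite {(I, J). I \<subseteq> {..<m :: nat} \<and> J \<subseteq> {..<m} \<and> card I = d \<and> card J = d}"
  by (rule finite_subset[of _ "Pow {..<m} \<times> Pow {..<m}"]) auto

lemma absL_minor_le_MnormL:
  assumes "I \<subseteq> {..<m}" and "J \<subseteq> {..<m}" and "card I = d" and "card J = d"
  shows "absL (det (submatrix (Gmat y m n X) I J)) \<le> MnormL y m n (int d) X"
proof (cases "d = 0")
  case True
  hence "submatrix (Gmat y m n X) I J = 1\<^sub>m 0"
    using submatrix_carrier[OF Gmat_carrier assms(1,2)] assms by (intro eq_matI) auto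
  thus ?thesis using True by (simp add: MnormL_def)
next
  case False
  thus ?thesis using assms finite_minor_indices[of m d]
    by (auto simp: MnormL_eq_Max intro!: Max_ge)
qed

lemma MnormL_attained:
  assumes "1 \<le> d" and "d \<le> m"
  obtains I J where "I \<subseteq> {..<m}" "J \<subseteq> {..<m}" "card I = d" "card J = d"
    and "MnormL y m n (int d) X = absL (det (submatrix (Gmat y m n X) I J))"
proof -
  let ?P = "{(I, J). I \<subseteq> {..<m} \<and> J \<subseteq> {..<m} \<and> card I = d \<and> card J = d}"
  have "({..<d}, {..<d}) \<in> ?P" using assms by auto
  hence "?P \<noteq> {}" by blast
  hence "MnormL y m n (int d) X \<in> (\<lambda>(I, J). absL (det (submatrix (Gmat y m n X) I J))) ` ?P"
    unfolding MnormL_eq_Max[OF assms(1)] using finite_minor_indices by (intro Max_in) auto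
  thus ?thesis using that by auto
qed

lemma MnormL_nonneg:
  assumes "d \<le> m"
  shows "MnormL y m n (int d) X \<ge> 0"
proof -
  have "absL (det (submatrix (Gmat y m n X) {..<d} {..<d})) \<le> MnormL y m n (int d) X"
    using assms by (intro absL_minor_le_MnormL) auto
  thus ?thesis using absL_nonneg order_trans by blast
qed

lemma MnormL_le_power:
  assumes "d \<le> m" and "K \<ge> 0"
    and entries: "\<And>i l. i < m \<Longrightarrow> l < m \<Longrightarrow> absL (Gmat y m n X $$ (i, l)) \<le> K"
  shows "MnormL y m n (int d) X \<le> K ^ d"
proof (cases "d = 0")
  case False
  then obtain I J where IJ: "I \<subseteq> {..<m}" "J \<subseteq> {..<m}" "card I = d" "card J = d"
    and "MnormL y m n (int d) X = absL (det (submatrix (Gmat y m n X) I J))"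
    using MnormL_attained[OF _ assms(1), where y = y and n = n and X = X] by auto
  moreover have "absL (det (submatrix (Gmat y m n X) I J)) \<le> K ^ d"
    using submatrix_carrier[OF Gmat_carrier IJ(1,2)] IJ assms(2)
    by (intro absL_det_le_power)
      (auto simp: submatrix_index_pick[OF Gmat_carrier] pick_less_of_subset intro!: entries)
  ultimately show ?thesis by simp
qed (simp add: MnormL_def)

lemma bdd_above_MnormL_ballL:
  fixes C :: "'a::{field,finite} fls mat"
  assumes orth: "orthonormalL m n y" and C: "C \<in> carrier_mat m n" and d: "d \<le> m"
  shows "bdd_above (MnormL y m n (int d) ` ballL m n C z)"
proof (rule bdd_aboveI2)
  define K where "K = max 1 (max (radL TYPE('a) z) (mnormL C))"
  fix X assume X: "X \<in> ballL m n C z"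
  have "absL (X $$ (l, r)) \<le> K" if "l < m" "r < n" for l r
  proof -
    have "X $$ (l, r) = (X $$ (l, r) - C $$ (l, r)) + C $$ (l, r)" by simp
    thus ?thesis
      using absL_add_le_max[of "X $$ (l, r) - C $$ (l, r)" "C $$ (l, r)"] ballL_entry_le[OF X C that]
        absL_le_mnormL[of l C r] C that unfolding K_def by auto
  qed
  hence "\<And>i l. i < m \<Longrightarrow> l < m \<Longrightarrow> absL (Gmat y m n X $$ (i, l)) \<le> K"
    using absL_Gmat_le[OF orth ballL_carrier[OF X]] unfolding K_def by simp
  thus "MnormL y m n (int d) X \<le> K ^ d"
    using d unfolding K_def by (intro MnormL_le_power) auto
qed

lemma MnormL_le_MsetL_ballL:
  fixes C :: "'a::{field,finite} fls mat"
  assumes "orthonormalL m n y" and "C \<in> carrier_mat m n" and "d \<le> m" and "X \<in> ballL m n C z"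
  shows "MnormL y m n (int d) X \<le> MsetL y m n (int d) (ballL m n C z)"
  unfolding MsetL_def using assms by (intro cSUP_upper bdd_above_MnormL_ballL)

lemma MsetL_ballL_nonneg:
  fixes C :: "'a::{field,finite} fls mat"
  assumes "orthonormalL m n y" and "C \<in> carrier_mat m n" and "d \<le> m"
  shows "MsetL y m n (int d) (ballL m n C z) \<ge> 0"
  using MnormL_nonneg[OF assms(3)] MnormL_le_MsetL_ballL[OF assms center_in_ballL[OF assms(2)]]
  by (meson order_trans)

section \<open>Stability of the largest minor on a small ball\<close>

lemma absL_minor_diff_le_ballL:
  fixes C :: "'a::{field,finite} fls mat"
  assumes orth: "orthonormalL m n y" and C: "C \<in> carrier_mat m n"
    and A: "A \<in> ballL m n C z" and A': "A' \<in> ballL m n C z"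
    and I: "I \<subseteq> {..<m}" and J: "J \<subseteq> {..<m}" and cards: "card I = d" "card J = d"
  shows "absL (det (submatrix (Gmat y m n A) I J) - det (submatrix (Gmat y m n A') I J))
           \<le> mnormL (A - A') * MsetL y m n (int (d - 1)) (ballL m n C z)"
proof (rule absL_det_submatrix_diff_le[OF Gmat_carrier Gmat_carrier _ _ _ _ I J cards])
  have d: "d \<le> m" using card_mono[OF _ I] cards by simp
  show "MsetL y m n (int (d - 1)) (ballL m n C z) \<ge> 0"
    using d by (intro MsetL_ballL_nonneg[OF orth C]) simp
  show "absL (Gmat y m n A $$ (i, l) - Gmat y m n A' $$ (i, l)) \<le> mnormL (A - A')"
    if "i < m" "l < m" for i l
    using absL_Gmat_diff_le[OF orth ballL_carrier[OF A'] ballL_carrier[OF A] that] .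
  show "absL (det (submatrix (col_hybrid (Gmat y m n A') (Gmat y m n A) k) I' J'))
          \<le> MsetL y m n (int (d - 1)) (ballL m n C z)"
    if "I' \<subseteq> {..<m}" "J' \<subseteq> {..<m}" "card I' = d - 1" "card J' = d - 1" for k I' J'
  proof -
    have "absL (det (submatrix (Gmat y m n (row_hybrid A' A k)) I' J'))
        \<le> MnormL y m n (int (d - 1)) (row_hybrid A' A k)"
      by (rule absL_minor_le_MnormL[OF that])
    also have "\<dots> \<le> MsetL y m n (int (d - 1)) (ballL m n C z)"
      using d by (intro MnormL_le_MsetL_ballL[OF orth C _ row_hybrid_in_ballL[OF C A' A]]) simp
    finally show ?thesis by (simp add: col_hybrid_Gmat[OF ballL_carrier[OF A'] ballL_carrier[OF A]])
  qed
qed (rule mnormL_nonneg)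

text \<open>By the strict ultrametric inequality a perturbation smaller than the largest minor
  at A keeps that minor's size.\<close>

lemma MnormL_le_of_close:
  fixes C :: "'a::{field,finite} fls mat"
  assumes orth: "orthonormalL m n y" and C: "C \<in> carrier_mat m n"
    and A: "A \<in> ballL m n C z" and A': "A' \<in> ballL m n C z" and d: "1 \<le> d" "d \<le> m"
    and close: "mnormL (A - A') * MsetL y m n (int (d - 1)) (ballL m n C z) < MnormL y m n (int d) A"
  shows "MnormL y m n (int d) A \<le> MnormL y m n (int d) A'"
proof -
  obtain I J where IJ: "I \<subseteq> {..<m}" "J \<subseteq> {..<m}" "card I = d" "card J = d"
    and max: "MnormL y m n (int d) A = absL (det (submatrix (Gmat y m n A) I J))"
    using MnormL_attained[OF d] by metis
  have "absL (det (submatrix (Gmat y m n A) I J) - det (submatrix (Gmat y m n A') I J))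
      < absL (det (submatrix (Gmat y m n A) I J))"
    using absL_minor_diff_le_ballL[OF orth C A A' IJ] close max by linarith
  hence "absL (det (submatrix (Gmat y m n A) I J)) \<le> absL (det (submatrix (Gmat y m n A') I J))"
    by (rule absL_le_of_absL_diff_less)
  also have "\<dots> \<le> MnormL y m n (int d) A'" by (rule absL_minor_le_MnormL[OF IJ])
  finally show ?thesis using max by simp
qed

text \<open>The matrix C'' + e E_11 with absL e = radL z'' witnesses the radius of the inner ball.\<close>

lemma radL_le_of_ballL_subset:
  fixes C C'' :: "'a::{field,finite} fls mat"
  assumes mn: "0 < m" "0 < n" and C: "C \<in> carrier_mat m n" and C'': "C'' \<in> carrier_mat m n"
    and sub: "ballL m n C'' z'' \<subseteq> ballL m n C z"
  shows "radL TYPE('a) z'' \<le> radL TYPE('a) z"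
proof -
  define e :: "'a fls" where "e = fls_shift z'' 1"
  have e: "absL e = radL TYPE('a) z''"
    unfolding e_def absL_def radL_def by (simp add: fls_shift_eq0_iff)
  define E where "E = mat m n (\<lambda>(i, j). C'' $$ (i, j) + (if i = 0 \<and> j = 0 then e else 0))"
  have "E \<in> ballL m n C'' z''"
    unfolding ballL_iff_entries[OF C'']
  proof safe
    show "E \<in> carrier_mat m n" unfolding E_def by simp
    fix i j assume "i < m" "j < n"
    thus "absL (E $$ (i, j) - C'' $$ (i, j)) \<le> radL TYPE('a) z''"
      using e radL_pos[where 'a = 'a and z = z''] by (simp add: E_def less_imp_le)
  qed
  hence "absL ((E $$ (0, 0) - C $$ (0, 0)) - (C'' $$ (0, 0) - C $$ (0, 0))) \<le> radL TYPE('a) z"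
    using sub center_in_ballL[OF C''] by (intro absL_diff_le ballL_entry_le[OF _ C mn]) auto
  moreover have "(E $$ (0, 0) - C $$ (0, 0)) - (C'' $$ (0, 0) - C $$ (0, 0)) = e"
    using mn by (simp add: E_def)
  ultimately show ?thesis using e by simp
qed

lemma mnormL_diff_le_of_nested_ballL:
  fixes C C'' C' :: "'a::{field,finite} fls mat"
  assumes m: "0 < m" and carriers: "C \<in> carrier_mat m n" "C'' \<in> carrier_mat m n" "C' \<in> carrier_mat m n"
    and sub: "ballL m n C'' z'' \<subseteq> ballL m n C z"
    and rad: "radL TYPE('a) z' \<le> c * radL TYPE('a) z''" and c: "c \<ge> 0"
    and A: "A \<in> ballL m n C' z'" and A': "A' \<in> ballL m n C' z'"
  shows "mnormL (A - A') \<le> c * radL TYPE('a) z"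
proof (cases "n = 0")
  case True
  hence "mnormL (A - A') \<le> 0" using ballL_carrier[OF A'] by (intro mnormL_leI) auto
  thus ?thesis using c radL_pos[where 'a = 'a and z = z] by (meson mult_nonneg_nonneg less_imp_le order_trans)
next
  case False
  have "mnormL (A - A') \<le> radL TYPE('a) z'" by (rule mnormL_diff_le_radL[OF A' A carriers(3)])
  also have "\<dots> \<le> c * radL TYPE('a) z''" by (rule rad)
  also have "\<dots> \<le> c * radL TYPE('a) z"
    using radL_le_of_ballL_subset[OF m _ carriers(1,2) sub] False c by (simp add: mult_left_mono)
  finally show ?thesis .
qed

lemma MsetL_ballL_le_MnormL:
  fixes C C'' C' :: "'a::{field,finite} fls mat"
  assumes orth: "orthonormalL m n y" and d: "1 \<le> d" "d \<le> m"
    and cents: "C \<in> carrier_mat m n" "C'' \<in> carrier_mat m n" "C' \<in> carrier_mat m n"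
    and sub1: "ballL m n C'' z'' \<subseteq> ballL m n C z" and sub2: "ballL m n C' z' \<subseteq> ballL m n C'' z''"
    and mu: "\<mu> > 0" and rad: "radL TYPE('a) z' \<le> \<mu> / 2 * radL TYPE('a) z''"
    and large: "\<And>A. A \<in> ballL m n C'' z'' \<Longrightarrow>
      radL TYPE('a) z * \<mu> * MsetL y m n (int (d - 1)) (ballL m n C'' z'') < MnormL y m n (int d) A"
    and A': "A' \<in> ballL m n C' z'"
  shows "MsetL y m n (int d) (ballL m n C' z') \<le> MnormL y m n (int d) A'"
proof -
  let ?S = "MsetL y m n (int (d - 1)) (ballL m n C'' z'')"
  have S: "?S \<ge> 0" using d by (intro MsetL_ballL_nonneg[OF orth cents(2)]) simp
  have "MnormL y m n (int d) A \<le> MnormL y m n (int d) A'" if A: "A \<in> ballL m n C' z'" for A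
  proof (rule MnormL_le_of_close[OF orth cents(2) subsetD[OF sub2 A] subsetD[OF sub2 A'] d])
    have "mnormL (A - A') \<le> \<mu> / 2 * radL TYPE('a) z"
      using d rad mu by (intro mnormL_diff_le_of_nested_ballL[OF _ cents sub1 _ _ A A']) auto
    also have "\<dots> \<le> radL TYPE('a) z * \<mu>" using mu radL_pos[where 'a = 'a and z = z] by simp
    finally have "mnormL (A - A') * ?S \<le> radL TYPE('a) z * \<mu> * ?S" using S by (rule mult_right_mono)
    also have "\<dots> < MnormL y m n (int d) A" by (rule large[OF subsetD[OF sub2 A]])
    finally show "mnormL (A - A') * ?S < MnormL y m n (int d) A" .
  qed
  thus ?thesis unfolding MsetL_def using A' by (intro cSUP_least) auto
qed

theorem corollary3p4:
  fixes y :: "nat \<Rightarrow> 'a::{field,finite} fls vec"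
    and m n v :: nat
    and C C'' C' :: "'a fls mat"
    and z z'' z' :: int
    and \<mu> :: real
  assumes orth: "orthonormalL m n y"
    and v: "1 \<le> v" "v \<le> m"
    and cents: "C \<in> carrier_mat m n" "C'' \<in> carrier_mat m n" "C' \<in> carrier_mat m n"
    and sub1: "ballL m n C'' z'' \<subseteq> ballL m n C z"
    and mu: "\<mu> > 0"
    and hyp: "\<forall>A\<in>ballL m n C'' z''.
               MnormL y m n (int v - 1) A
                 > radL TYPE('a) z * \<mu> * MsetL y m n (int v - 2) (ballL m n C'' z'')"
    and sub2: "ballL m n C' z' \<subseteq> ballL m n C'' z''"
    and rad: "radL TYPE('a) z' < 1/2 * \<mu> * radL TYPE('a) z''"
  shows "\<forall>A'\<in>ballL m n C' z'.
           MnormL y m n (int v - 1) A' > 1/2 * MsetL y m n (int v - 1) (ballL m n C' z')"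
proof
  fix A' assume A': "A' \<in> ballL m n C' z'"
  show "MnormL y m n (int v - 1) A' > 1/2 * MsetL y m n (int v - 1) (ballL m n C' z')"
  proof (cases "v = 1")
    case True
    moreover have "ballL m n C' z' \<noteq> {}" using A' by blast
    ultimately show ?thesis by (simp add: MsetL_def MnormL_def cSUP_const)
  next
    case False
    define d where "d = v - 1"
    have d: "1 \<le> d" "d \<le> m" "int v - 1 = int d" "int v - 2 = int (d - 1)"
      using v False unfolding d_def by auto
    have large: "radL TYPE('a) z * \<mu> * MsetL y m n (int (d - 1)) (ballL m n C'' z'')
        < MnormL y m n (int d) A" if "A \<in> ballL m n C'' z''" for A
      using hyp that unfolding d(3,4) by blast
    have "MsetL y m n (int d) (ballL m n C' z') \<le> MnormL y m n (int d) A'"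
      using rad by (intro MsetL_ballL_le_MnormL[OF orth d(1,2) cents sub1 sub2 mu _ large A']) simp
    moreover have "0 \<le> radL TYPE('a) z * \<mu> * MsetL y m n (int (d - 1)) (ballL m n C'' z'')"
      using mu radL_pos[where 'a = 'a and z = z] d MsetL_ballL_nonneg[OF orth cents(2), of "d - 1"]
      by simp
    hence "0 < MnormL y m n (int d) A'" using large[OF subsetD[OF sub2 A']] by linarith
    ultimately show ?thesis using d by simp
  qed
qed

end
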